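(* Let $\mathcal{N}>0$ be real, let $n\ge 0$ be an integer, and put $N=\mathcal{N}+\tfrac12-n$. Then the Cari\~{n}ena polynomial $\mathcal{H}_n^{\mathcal{N}}$ and the relativistic Hermite polynomial $H_n^{N}$ satisfy \[ \mathcal{H}_{n}^{\mathcal{N}}(X)=\left(\frac{N}{\mathcal{N}}\right)^{\frac{n}{2}}H_{n}^{N}\!\left(X\sqrt{\frac{N}{\mathcal{N}}}\right). \]
   Context: For a real parameter $N\neq 0$ and an integer $n\ge0$, the relativistic Hermite polynomial of degree $n$ is defined by the Rodrigues formula \[ H_n^N(X)=(-1)^n\left(1+\frac{X^2}{N}\right)^{N+n}\frac{d^n}{dX^n}\left(1+\frac{X^2}{N}\right)^{-N}; \] the right-hand side is a polynomial in $X$ (e.g. $H_0^N=1$, $H_1^N=2X$, $H_2^N=2(-1+X^2(2+\frac1N))$). For a real parameter $\mathcal{N}>0$ and integer $n\ge0$, the Cari\~{n}ena polynomial of degree $n$ is defined by \[ \mathcal{H}_n^{\mathcal{N}}(X)=(-1)^n\left(1+\frac{X^2}{\mathcal{N}}\right)^{\mathcal{N}+\frac12}\frac{d^n}{dX^n}\left(1+\frac{X^2}{\mathcal{N}}\right)^{n-\mathcal{N}-\frac12},\qquad X\in\mathbb{R}. \] Both sides of the claimed identity are regarded as polynomials in $X$. *)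

theory Defs
  imports "HOL-Analysis.Analysis" "HOL-Computational_Algebra.Polynomial"
begin

text \<open>Relativistic Hermite polynomial H_n^N (N nonzero), defined by the Rodrigues
formula: the unique real polynomial agreeing with the Rodrigues expression on the
(nonempty open) set of reals X where 1 + X^2/N > 0.\<close>
definition rel_hermite :: "nat \<Rightarrow> real \<Rightarrow> real poly" where
  "rel_hermite n N = (THE p. \<forall>X::real. 1 + X^2 / N > 0 \<longrightarrow>
      poly p X = (-1)^n * (1 + X^2 / N) powr (N + real n) *
        (deriv ^^ n) (\<lambda>x. (1 + x^2 / N) powr (- N)) X)"

definition carinena :: "nat \<Rightarrow> real \<Rightarrow> real poly" where
  "carinena n NN = (THE p. \<forall>X::real.
      poly p X = (-1)^n * (1 + X^2 / NN) powr (NN + 1/2) *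
        (deriv ^^ n) (\<lambda>x. (1 + x^2 / NN) powr (real n - NN - 1/2)) X)"

end

theory Submission
  imports Defs
begin

text \<open>Both families come from one Rodrigues formula: the n-th derivative of
(1 + b x^2) powr a equals P(x) (1 + b x^2) powr (a - n) for a polynomial P = P[b,a,n]
given by a recursion in n. The Carinena polynomial is (-1)^n P[1/NN, -N, n] and the
relativistic Hermite polynomial is (-1)^n P[1/N, -N, n], where -N = n - NN - 1/2.
The recursion is compatible with the substitution x := c x, which gives
P[b c^2, a, n](x) = c^n P[b, a, n](c x); taking c = sqrt (N/NN) turns 1/N into 1/NN.
Since N/NN may be negative, c lives in the complex numbers.\<close>

text \<open>If P(x) (1 + b x^2) powr (a - n) is the n-th derivative, differentiating it gives
the recursion below for the next one.\<close>

fun rodrigues_poly :: "'a::field \<Rightarrow> 'a \<Rightarrow> nat \<Rightarrow> 'a poly" where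
  "rodrigues_poly b a 0 = 1"
| "rodrigues_poly b a (Suc n) =
     pderiv (rodrigues_poly b a n) * [:1, 0, b:]
     + smult (a - of_nat n) (rodrigues_poly b a n * [:0, 2 * b:])"

lemma has_real_derivative_rodrigues_step:
  fixes a b x :: real
  assumes pos: "1 + b * x^2 > 0"
  shows "((\<lambda>y. poly (rodrigues_poly b a n) y * (1 + b * y^2) powr (a - n)) has_real_derivative
           poly (rodrigues_poly b a (Suc n)) x * (1 + b * x^2) powr (a - Suc n)) (at x)"
proof -
  define P where "P = rodrigues_poly b a n"
  define Q where "Q = 1 + b * x^2"
  have Q_powr: "Q powr (a - n) = Q powr (a - n - 1) * Q"
    using pos powr_add[of Q "a - n - 1" 1] by (simp add: Q_def)
  have "((\<lambda>y. 1 + b * y^2) has_real_derivative 2 * b * x) (at x)"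
    by (auto intro!: derivative_eq_intros)
  from DERIV_fun_powr[OF this, of "a - n"] pos
  have "((\<lambda>y. (1 + b * y^2) powr (a - n)) has_real_derivative
          (a - n) * Q powr (a - n - 1) * (2 * b * x)) (at x)"
    by (simp add: Q_def)
  then have "((\<lambda>y. poly P y * (1 + b * y^2) powr (a - n)) has_real_derivative
          poly P x * ((a - n) * Q powr (a - n - 1) * (2 * b * x)) + poly (pderiv P) x * Q powr (a - n))
          (at x)"
    unfolding Q_def by (rule DERIV_mult'[OF poly_DERIV])
  moreover have "poly P x * ((a - n) * Q powr (a - n - 1) * (2 * b * x)) + poly (pderiv P) x * Q powr (a - n)
      = poly (rodrigues_poly b a (Suc n)) x * Q powr (a - Suc n)"
    unfolding Q_powr diff_diff_eq by (simp add: P_def Q_def algebra_simps power2_eq_square)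
  ultimately show ?thesis
    by (simp add: P_def Q_def)
qed

lemma higher_deriv_powr_rodrigues:
  fixes a b x :: real
  assumes "1 + b * x^2 > 0"
  shows "(deriv ^^ n) (\<lambda>y. (1 + b * y^2) powr a) x
           = poly (rodrigues_poly b a n) x * (1 + b * x^2) powr (a - n)"
  using assms
proof (induction n arbitrary: x)
  case 0 then show ?case by simp
next
  case (Suc n)
  have "open {y::real. 1 + b * y^2 > 0}"
    by (intro open_Collect_less continuous_intros)
  then have "((deriv ^^ n) (\<lambda>y. (1 + b * y^2) powr a) has_real_derivative
          poly (rodrigues_poly b a (Suc n)) x * (1 + b * x^2) powr (a - Suc n)) (at x)"
    using Suc by (intro has_field_derivative_transform_within_open
        [OF has_real_derivative_rodrigues_step]) auto
  then show ?case
    by (simp add: DERIV_imp_deriv)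
qed

lemma rodrigues_poly_rescale:
  fixes b c :: "'a::field"
  shows "rodrigues_poly (b * c^2) a n = smult (c^n) (pcompose (rodrigues_poly b a n) [:0, c:])"
proof (induction n)
  case 0
  show ?case by (simp add: one_pCons pcompose_pCons)
next
  case (Suc n)
  define P where "P = rodrigues_poly b a n"
  have quadratic: "pcompose [:1, 0, b:] [:0, c:] = [:1, 0, b * c^2:]"
    by (simp add: pcompose_pCons power2_eq_square)
  have linear: "smult c (pcompose [:0, 2 * b:] [:0, c:]) = [:0, 2 * (b * c^2):]"
    by (simp add: pcompose_pCons power2_eq_square algebra_simps)
  have chain_rule: "pderiv (pcompose P [:0, c:]) = smult c (pcompose (pderiv P) [:0, c:])"
    by (simp add: pderiv_pcompose pderiv_pCons)
  have "rodrigues_poly (b * c^2) a (Suc n)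
      = smult (c^n) (smult c (pcompose (pderiv P) [:0, c:])) * [:1, 0, b * c^2:]
        + smult (a - of_nat n) (smult (c^n) (pcompose P [:0, c:]) * smult c (pcompose [:0, 2 * b:] [:0, c:]))"
    by (simp only: rodrigues_poly.simps Suc[folded P_def] pderiv_smult chain_rule linear)
  also have "\<dots> = smult (c^Suc n) (pcompose (pderiv P) [:0, c:] * pcompose [:1, 0, b:] [:0, c:]
      + smult (a - of_nat n) (pcompose P [:0, c:] * pcompose [:0, 2 * b:] [:0, c:]))"
    by (simp add: quadratic smult_add_right algebra_simps)
  also have "\<dots> = smult (c^Suc n) (pcompose (rodrigues_poly b a (Suc n)) [:0, c:])"
    by (simp only: P_def rodrigues_poly.simps pcompose_add pcompose_mult pcompose_smult)
  finally show ?case .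
qed

lemma map_poly_of_real_add:
  "map_poly of_real (p + q) = (map_poly of_real p + map_poly of_real q :: 'a::real_algebra_1 poly)"
  by (intro poly_eqI) (simp add: coeff_map_poly)

lemma map_poly_of_real_smult:
  "map_poly of_real (smult c p) =
    (smult (of_real c) (map_poly of_real p) :: 'a::{real_algebra_1, comm_ring_1} poly)"
  by (intro map_poly_smult) simp_all

lemma map_poly_of_real_mult:
  "map_poly of_real (p * q) =
    (map_poly of_real p * map_poly of_real q :: 'a::{real_algebra_1, comm_ring_1} poly)"
  by (induction p) (simp_all add: map_poly_of_real_add map_poly_of_real_smult map_poly_pCons)

lemma map_poly_of_real_pderiv:
  "map_poly of_real (pderiv p) = (pderiv (map_poly of_real p) :: 'a::{real_algebra_1, idom} poly)"
  by (intro poly_eqI) (simp add: coeff_map_poly coeff_pderiv)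

lemma map_poly_of_real_rodrigues_poly:
  "map_poly of_real (rodrigues_poly b a n) =
    (rodrigues_poly (of_real b) (of_real a) n :: 'a::real_field poly)"
  by (induction n) (simp_all add: map_poly_of_real_add map_poly_of_real_smult
      map_poly_of_real_mult map_poly_of_real_pderiv map_poly_pCons)

lemma rodrigues_formula_eq_poly:
  fixes a b x :: real
  assumes "1 + b * x^2 > 0"
  shows "(1 + b * x^2) powr (real n - a) * (deriv ^^ n) (\<lambda>y. (1 + b * y^2) powr a) x
           = poly (rodrigues_poly b a n) x"
  using assms by (simp add: higher_deriv_powr_rodrigues mult.left_commute flip: powr_add)

lemma poly_eqI_on_open:
  fixes p q :: "'a::{real_normed_field, perfect_space} poly"
  assumes "open S" "S \<noteq> {}" "\<And>x. x \<in> S \<Longrightarrow> poly p x = poly q x"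
  shows "p = q"
proof (rule ccontr)
  assume "p \<noteq> q"
  then have "finite {x. poly (p - q) x = 0}"
    by (intro poly_roots_finite) simp
  moreover have "S \<subseteq> {x. poly (p - q) x = 0}"
    using assms(3) by auto
  ultimately show False
    using assms(1,2) finite_imp_not_open finite_subset by blast
qed

lemma carinena_eq_rodrigues_poly:
  assumes "NN > 0"
  shows "carinena n NN = smult ((-1)^n) (rodrigues_poly (1/NN) (real n - NN - 1/2) n)"
  unfolding carinena_def
proof (rule the_equality)
  have "1 + 1/NN * X^2 > 0" for X
    using assms by (simp add: add_pos_nonneg)
  from rodrigues_formula_eq_poly[OF this, where n = n and a = "real n - NN - 1/2"]
  show "\<forall>X. poly (smult ((-1)^n) (rodrigues_poly (1/NN) (real n - NN - 1/2) n)) X =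
      (-1)^n * (1 + X^2 / NN) powr (NN + 1/2) *
        (deriv ^^ n) (\<lambda>x. (1 + x^2 / NN) powr (real n - NN - 1/2)) X"
    by simp
  then show "\<forall>X. poly p X = (-1)^n * (1 + X^2 / NN) powr (NN + 1/2) *
        (deriv ^^ n) (\<lambda>x. (1 + x^2 / NN) powr (real n - NN - 1/2)) X
      \<Longrightarrow> p = smult ((-1)^n) (rodrigues_poly (1/NN) (real n - NN - 1/2) n)" for p
    by (auto intro: poly_ext)
qed

lemma rel_hermite_eq_rodrigues_poly:
  assumes "N \<noteq> 0"
  shows "rel_hermite n N = smult ((-1)^n) (rodrigues_poly (1/N) (- N) n)"
  unfolding rel_hermite_def
proof (rule the_equality)
  show formula: "\<forall>X. 1 + X^2 / N > 0 \<longrightarrow> poly (smult ((-1)^n) (rodrigues_poly (1/N) (- N) n)) X =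
      (-1)^n * (1 + X^2 / N) powr (N + real n) * (deriv ^^ n) (\<lambda>x. (1 + x^2 / N) powr (- N)) X"
    using rodrigues_formula_eq_poly[where b = "1/N" and n = n and a = "- N"] by (simp add: add.commute)
  have "open {X::real. 1 + X^2 / N > 0}"
    using assms by (intro open_Collect_less continuous_intros) auto
  moreover have "{X::real. 1 + X^2 / N > 0} \<noteq> {}"
    by (auto intro!: exI[of _ 0])
  ultimately show "\<forall>X. 1 + X^2 / N > 0 \<longrightarrow> poly p X =
      (-1)^n * (1 + X^2 / N) powr (N + real n) * (deriv ^^ n) (\<lambda>x. (1 + x^2 / N) powr (- N)) X
      \<Longrightarrow> p = smult ((-1)^n) (rodrigues_poly (1/N) (- N) n)" for p
    using formula by (intro poly_eqI_on_open[of "{X. 1 + X^2 / N > 0}"]) auto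
qed

theorem theorem1:
  fixes NN :: real and n :: nat
  assumes "NN > 0"
    and "NN + 1/2 - real n \<noteq> 0"
  shows "let N = NN + 1/2 - real n;
             c = csqrt (complex_of_real (N / NN))
         in map_poly complex_of_real (carinena n NN)
              = smult (c ^ n) (pcompose (map_poly complex_of_real (rel_hermite n N)) [:0, c:])"
proof -
  define N where "N = NN + 1/2 - real n"
  define c where "c = csqrt (complex_of_real (N / NN))"
  have "N \<noteq> 0" "real n - NN - 1/2 = - N"
    using assms by (simp_all add: N_def)
  have scale: "of_real (1/N) * c^2 = complex_of_real (1/NN)"
    using \<open>N \<noteq> 0\<close> assms by (simp add: c_def field_simps)
  have "map_poly complex_of_real (carinena n NN)
      = smult ((-1)^n) (rodrigues_poly (of_real (1/N) * c^2) (complex_of_real (- N)) n)"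
    unfolding scale carinena_eq_rodrigues_poly[OF assms(1)] \<open>real n - NN - 1/2 = - N\<close>
    by (simp only: map_poly_of_real_smult map_poly_of_real_rodrigues_poly
        of_real_power of_real_minus of_real_1)
  also have "\<dots> = smult (c ^ n) (pcompose (map_poly complex_of_real (rel_hermite n N)) [:0, c:])"
    unfolding rodrigues_poly_rescale rel_hermite_eq_rodrigues_poly[OF \<open>N \<noteq> 0\<close>]
    by (simp add: map_poly_of_real_smult map_poly_of_real_rodrigues_poly pcompose_smult mult.commute)
  finally show ?thesis
    unfolding N_def c_def Let_def .
qed

end
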